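(* Let $\kappa=\mathrm{non}(\mathsf{SMZ})$ be the minimal cardinality of a set of reals that is not strongly null. Assume that there exists a strongly unbounded set $A\subseteq\mathbb{N}^{\mathbb{N}}$ with $|A|=\kappa$. Then there exist a strongly null set of reals $X\subseteq\mathbb{R}$ and a continuous function $f$ defined on $X$ whose image $Y=f[X]$ is a set of reals that is not strongly null.
   Context: A set of reals $X\subseteq\mathbb{R}$ is strongly null (has strong measure zero) if for each sequence $(\epsilon_n)_{n\in\mathbb{N}}$ of positive reals there exists a sequence of intervals $(I_n)_{n\in\mathbb{N}}$ covering $X$ with $\mathrm{diam}(I_n)<\epsilon_n$ for all $n$. $\mathsf{SMZ}$ denotes the collection of strongly null sets of reals, and $\mathrm{non}(\mathsf{SMZ})=\min\{|X| : X\subseteq\mathbb{R},\ X\notin\mathsf{SMZ}\}$. For $f,g\in\mathbb{N}^{\mathbb{N}}$, $f\le^* g$ means $f(n)\le g(n)$ for all but finitely many $n$. A set $A\subseteq\mathbb{N}^{\mathbb{N}}$ is strongly unbounded if for each $f\in\mathbb{N}^{\mathbb{N}}$, $|\{g\in A : g\le^* f\}|<|A|$. *)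

theory Defs
  imports "HOL-Analysis.Analysis"
begin

text \<open>We use closed intervals
  {a n .. b n} with b n - a n < eps n (empty if b n < a n).\<close>
definition strongly_null :: "real set \<Rightarrow> bool" where
  "strongly_null X \<longleftrightarrow>
     (\<forall>eps::nat \<Rightarrow> real. (\<forall>n. eps n > 0) \<longrightarrow>
        (\<exists>a b :: nat \<Rightarrow> real. (\<forall>n. b n - a n < eps n) \<and> X \<subseteq> (\<Union>n. {a n .. b n})))"

definition has_card_nonSMZ :: "'a set \<Rightarrow> bool" where
  "has_card_nonSMZ S \<longleftrightarrow>
     (\<exists>X::real set. \<not> strongly_null X \<and> (card_of X, card_of S) \<in> ordIso) \<and>
     (\<forall>X::real set. (card_of X, card_of S) \<in> ordLess \<longrightarrow> strongly_null X)"

definition le_star :: "(nat \<Rightarrow> nat) \<Rightarrow> (nat \<Rightarrow> nat) \<Rightarrow> bool" where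
  "le_star f g \<longleftrightarrow> (\<forall>\<^sub>F n in sequentially. f n \<le> g n)"

definition strongly_unbounded :: "(nat \<Rightarrow> nat) set \<Rightarrow> bool" where
  "strongly_unbounded A \<longleftrightarrow>
     (\<forall>f. (card_of {g \<in> A. le_star g f}, card_of A) \<in> ordLess)"

end

theory Submission imports Defs "HOL-Library.Nat_Bijection" begin

text \<open>Take a strongly unbounded set A of size non(SMZ) and a map e with e ` A not
  strongly null. Each a \<in> A is turned into a strictly increasing sequence that dominates a
  and whose parities spell out the integer part and the binary digits of e a. The map sending
  s to the sum of 3 ^ (- s n) embeds strictly increasing sequences into the reals with a
  continuous inverse, so decoding is continuous on the image X of A and maps X onto e ` A.
  X is strongly null: given \<epsilon>, intervals of length below \<epsilon> (2 k) around the countably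
  many finite partial sums catch every point whose code s exceeds, at some n, a threshold
  depending on the first n terms of s. The codes that never do so form a finitely branching
  tree, so they are bounded by a single g; they come from the fewer than non(SMZ) elements
  a with a \<le>* g, and are covered by intervals of length below \<epsilon> (2 k + 1).\<close>

lemma strongly_null_subset:
  assumes S: "strongly_null S" and "T \<subseteq> S" shows "strongly_null T"
  unfolding strongly_null_def
proof (intro allI impI)
  fix eps :: "nat \<Rightarrow> real" assume eps: "\<forall>n. 0 < eps n"
  obtain a b where "\<forall>n. b n - a n < eps n" "S \<subseteq> (\<Union>n. {a n..b n})"
    using S[unfolded strongly_null_def, THEN spec, THEN mp, OF eps] by auto
  with \<open>T \<subseteq> S\<close> show "\<exists>a b. (\<forall>n. b n - a n < eps n) \<and> T \<subseteq> (\<Union>n. {a n..b n})"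
    by (meson order_trans)
qed

lemma strongly_null_if_remainder_strongly_null:
  assumes "\<And>eps :: nat \<Rightarrow> real. \<forall>n. 0 < eps n \<Longrightarrow>
    \<exists>a b. (\<forall>k. b k - a k < eps k) \<and> strongly_null (X - (\<Union>k. {a k..b k}))"
  shows "strongly_null X"
  unfolding strongly_null_def
proof (intro allI impI)
  fix eps :: "nat \<Rightarrow> real" assume eps: "\<forall>n. 0 < eps n"
  then have even_pos: "\<forall>k. 0 < eps (2 * k)" by blast
  obtain a b where ab: "\<forall>k. b k - a k < eps (2 * k)"
    and rest: "strongly_null (X - (\<Union>k. {a k..b k}))"
    using assms[OF even_pos] by blast
  have "\<forall>k. 0 < eps (2 * k + 1)" using eps by blast
  then obtain a' b' where ab': "\<forall>k. b' k - a' k < eps (2 * k + 1)"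
    and cover': "X - (\<Union>k. {a k..b k}) \<subseteq> (\<Union>k. {a' k..b' k})"
    using rest[unfolded strongly_null_def, THEN spec[of _ "\<lambda>k. eps (2 * k + 1)"], THEN mp]
    by auto
  define c where "c n = (if even n then a (n div 2) else a' (n div 2))" for n
  define d where "d n = (if even n then b (n div 2) else b' (n div 2))" for n
  show "\<exists>c d. (\<forall>n. d n - c n < eps n) \<and> X \<subseteq> (\<Union>n. {c n..d n})"
  proof (intro exI conjI allI)
    show "d n - c n < eps n" for n
      using ab ab' by (cases "even n") (auto simp: c_def d_def elim!: evenE oddE)
    show "X \<subseteq> (\<Union>n. {c n..d n})"
    proof
      fix x assume "x \<in> X"
      show "x \<in> (\<Union>n. {c n..d n})"
      proof (cases "x \<in> (\<Union>k. {a k..b k})")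
        case True
        then obtain k where "x \<in> {a k..b k}" by blast
        then have "x \<in> {c (2 * k)..d (2 * k)}" by (simp add: c_def d_def)
        then show ?thesis by blast
      next
        case False
        then obtain k where "x \<in> {a' k..b' k}" using cover' \<open>x \<in> X\<close> by blast
        then have "x \<in> {c (2 * k + 1)..d (2 * k + 1)}" by (simp add: c_def d_def)
        then show ?thesis by blast
      qed
    qed
  qed
qed

definition ternary_point :: "(nat \<Rightarrow> nat) \<Rightarrow> real" where
  "ternary_point s = (\<Sum>n. (1/3) ^ s n)"

lemma strict_mono_ge_add:
  fixes s :: "nat \<Rightarrow> nat"
  assumes "strict_mono s" shows "s n + i \<le> s (n + i)"
proof (induction i)
  case (Suc i)
  have "s (n + i) < s (n + Suc i)"
    using assms by (simp add: strict_mono_def)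
  with Suc show ?case by simp
qed simp

lemma summable_ternary_tail:
  assumes "strict_mono s" shows "summable (\<lambda>i. (1/3::real) ^ s (i + n))"
proof (rule summable_comparison_test)
  show "summable (\<lambda>i. (1/3::real) ^ i)" by (simp add: summable_geometric)
  have "i \<le> s (i + n)" for i
    using seq_suble[OF assms, of "i + n"] by simp
  then show "\<exists>N. \<forall>i\<ge>N. norm ((1/3::real) ^ s (i + n)) \<le> (1/3) ^ i"
    by (auto intro: power_decreasing)
qed

lemma ternary_point_split:
  "strict_mono s \<Longrightarrow> ternary_point s = (\<Sum>i<n. (1/3) ^ s i) + (\<Sum>i. (1/3) ^ s (i + n))"
  unfolding ternary_point_def
  using suminf_split_initial_segment[OF summable_ternary_tail[of s 0], of n] by (simp add: add.commute)

lemma ternary_tail_bounds: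
  assumes "strict_mono s"
  shows "(1/3) ^ s n \<le> (\<Sum>i. (1/3::real) ^ s (i + n))"
    and "(\<Sum>i. (1/3::real) ^ s (i + n)) \<le> 3/2 * (1/3) ^ s n"
proof -
  show "(1/3) ^ s n \<le> (\<Sum>i. (1/3::real) ^ s (i + n))"
    using sum_le_suminf[OF summable_ternary_tail[OF assms], of "{0}"] by simp
  have "(1/3::real) ^ s (i + n) \<le> (1/3) ^ s n * (1/3) ^ i" for i
    using strict_mono_ge_add[OF assms, of n i]
    by (simp add: power_add[symmetric] add.commute power_decreasing)
  moreover have "(\<lambda>i. (1/3) ^ s n * (1/3::real) ^ i) sums ((1/3) ^ s n * (1 / (1 - 1/3)))"
    by (intro sums_mult geometric_sums) simp
  ultimately have "(\<Sum>i. (1/3::real) ^ s (i + n)) \<le> (1/3) ^ s n * (1 / (1 - 1/3))"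
    by (rule sums_le[OF _ summable_sums[OF summable_ternary_tail[OF assms]]])
  then show "(\<Sum>i. (1/3::real) ^ s (i + n)) \<le> 3/2 * (1/3) ^ s n"
    by simp
qed

lemma ternary_point_approx:
  assumes s: "strict_mono s"
  shows "\<bar>ternary_point s - (\<Sum>i<n. (1/3) ^ s i)\<bar> \<le> 3/2 * (1/3) ^ s n"
proof -
  have "ternary_point s - (\<Sum>i<n. (1/3) ^ s i) = (\<Sum>i. (1/3) ^ s (i + n))"
    using ternary_point_split[OF s, of n] by simp
  moreover have "0 \<le> (1/3::real) ^ s n" by simp
  ultimately show ?thesis
    using ternary_tail_bounds[OF s, of n] by simp
qed

lemma ternary_point_gap:
  assumes s: "strict_mono s" and t: "strict_mono t"
    and agree: "\<forall>j<n. s j = t j" and less: "s n < t n"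
  shows "1/2 * (1/3::real) ^ s n \<le> ternary_point s - ternary_point t"
proof -
  have "(\<Sum>j<n. (1/3::real) ^ s j) = (\<Sum>j<n. (1/3) ^ t j)"
    using agree by simp
  moreover have "(1/3::real) ^ t n \<le> 1/3 * (1/3) ^ s n"
    using power_decreasing[of "Suc (s n)" "t n" "1/3::real"] less by simp
  ultimately show ?thesis
    using ternary_point_split[OF s, of n] ternary_point_split[OF t, of n]
      ternary_tail_bounds[OF s, of n] ternary_tail_bounds[OF t, of n]
    by linarith
qed

lemma ternary_point_separated:
  assumes s: "strict_mono s" and t: "strict_mono t" and "i \<le> N" "s i \<noteq> t i"
  shows "1/2 * (1/3::real) ^ s N \<le> \<bar>ternary_point s - ternary_point t\<bar>"
proof -
  define n where "n = (LEAST j. s j \<noteq> t j)"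
  have diff: "s n \<noteq> t n"
    unfolding n_def using assms(4) by (rule LeastI)
  have "n \<le> i"
    unfolding n_def using assms(4) by (rule Least_le)
  have agree: "\<forall>j<n. s j = t j"
    unfolding n_def using not_less_Least by blast
  have "s n \<le> s N"
    using \<open>n \<le> i\<close> \<open>i \<le> N\<close> s by (simp add: strict_mono_less_eq)
  show ?thesis
  proof (cases "s n < t n")
    case True
    have "(1/3::real) ^ s N \<le> (1/3) ^ s n"
      using \<open>s n \<le> s N\<close> by (rule power_decreasing) simp_all
    with ternary_point_gap[OF s t agree True] show ?thesis by linarith
  next
    case False
    with diff have less: "t n < s n" by simp
    have "(1/3::real) ^ s N \<le> (1/3) ^ t n"
      using less \<open>s n \<le> s N\<close> by (intro power_decreasing) simp_all
    moreover have "\<forall>j<n. t j = s j" using agree by simp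
    note ternary_point_gap[OF t s this less]
    ultimately show ?thesis by linarith
  qed
qed

lemma inj_on_ternary_point: "inj_on ternary_point {s. strict_mono s}"
proof (rule inj_onI, rule ccontr)
  fix s t assume "s \<in> {s. strict_mono s}" "t \<in> {s. strict_mono s}"
    "ternary_point s = ternary_point t" "s \<noteq> t"
  then obtain i where "s i \<noteq> t i" "strict_mono s" "strict_mono t" by auto
  from ternary_point_separated[OF this(2,3) order_refl this(1)] \<open>ternary_point s = ternary_point t\<close>
  show False using zero_less_power[of "1/3::real" "s i"] by linarith
qed

definition binary_value :: "(nat \<Rightarrow> nat) \<Rightarrow> real" where
  "binary_value b = (\<Sum>n. real (b n) / 2 ^ Suc n)"

lemma binary_value_bounds:
  assumes digits: "\<And>n. b n \<le> 1"
  shows "(\<Sum>n<N. real (b n) / 2 ^ Suc n) \<le> binary_value b"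
    and "binary_value b \<le> (\<Sum>n<N. real (b n) / 2 ^ Suc n) + (1/2) ^ N"
proof -
  have term_le: "real (b (i + N)) / 2 ^ Suc (i + N) \<le> (1/2) ^ N / 2 * (1/2) ^ i" for i
  proof -
    have "real (b (i + N)) / 2 ^ Suc (i + N) \<le> 1 / 2 ^ Suc (i + N)"
      using digits[of "i + N"] by (intro divide_right_mono) auto
    also have "\<dots> = (1/2) ^ N / 2 * (1/2) ^ i"
      by (simp add: power_add power_divide)
    finally show ?thesis .
  qed
  have geom: "(\<lambda>i. (1/2) ^ N / 2 * (1/2::real) ^ i) sums ((1/2) ^ N / 2 * (1 / (1 - 1/2)))"
    by (intro sums_mult geometric_sums) simp
  have tail_summable: "summable (\<lambda>i. real (b (i + N)) / 2 ^ Suc (i + N))"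
    by (rule summable_comparison_test'[OF sums_summable[OF geom], of 0]) (use term_le in simp)
  then have "summable (\<lambda>n. real (b n) / 2 ^ Suc n)"
    using summable_iff_shift[of "\<lambda>n. real (b n) / 2 ^ Suc n" N] by simp
  then have split: "binary_value b = (\<Sum>i. real (b (i + N)) / 2 ^ Suc (i + N)) + (\<Sum>n<N. real (b n) / 2 ^ Suc n)"
    unfolding binary_value_def by (rule suminf_split_initial_segment)
  have "0 \<le> (\<Sum>i. real (b (i + N)) / 2 ^ Suc (i + N))"
    by (rule suminf_nonneg[OF tail_summable]) simp
  then show "(\<Sum>n<N. real (b n) / 2 ^ Suc n) \<le> binary_value b"
    using split by simp
  have "(\<Sum>i. real (b (i + N)) / 2 ^ Suc (i + N)) \<le> (1/2) ^ N / 2 * (1 / (1 - 1/2))"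
    by (rule sums_le[OF term_le summable_sums[OF tail_summable] geom])
  then show "binary_value b \<le> (\<Sum>n<N. real (b n) / 2 ^ Suc n) + (1/2) ^ N"
    using split by simp
qed

lemma binary_value_agree:
  assumes "\<And>n. b n \<le> 1" "\<And>n. c n \<le> 1" and agree: "\<forall>n<N. b n = c n"
  shows "\<bar>binary_value b - binary_value c\<bar> \<le> (1/2) ^ N"
proof -
  have "(\<Sum>n<N. real (b n) / 2 ^ Suc n) = (\<Sum>n<N. real (c n) / 2 ^ Suc n)"
    using agree by simp
  then show ?thesis
    using binary_value_bounds[of b N] binary_value_bounds[of c N] assms(1,2) by fastforce
qed

definition binary_digit :: "real \<Rightarrow> nat \<Rightarrow> nat" where
  "binary_digit y n = nat (\<lfloor>y * 2 ^ Suc n\<rfloor> - 2 * \<lfloor>y * 2 ^ n\<rfloor>)"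

lemma floor_double_bounds:
  fixes u :: real
  shows "2 * \<lfloor>u\<rfloor> \<le> \<lfloor>2 * u\<rfloor>" and "\<lfloor>2 * u\<rfloor> \<le> 2 * \<lfloor>u\<rfloor> + 1"
  by linarith+

lemma binary_digit_le_1: "binary_digit y n \<le> 1"
  using floor_double_bounds(2)[of "y * 2 ^ n"] by (simp add: binary_digit_def mult_ac)

lemma real_binary_digit: "real (binary_digit y n) = \<lfloor>y * 2 ^ Suc n\<rfloor> - 2 * \<lfloor>y * 2 ^ n\<rfloor>"
  using floor_double_bounds(1)[of "y * 2 ^ n"] by (simp add: binary_digit_def mult_ac)

lemma binary_value_binary_digit: "binary_value (binary_digit y) = y - \<lfloor>y\<rfloor>"
proof -
  have partial: "(\<Sum>n<N. real (binary_digit y n) / 2 ^ Suc n) = \<lfloor>y * 2 ^ N\<rfloor> / 2 ^ N - \<lfloor>y\<rfloor>" for N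
    by (induction N) (simp_all add: real_binary_digit field_simps)
  have "norm (\<lfloor>y * 2 ^ N\<rfloor> / 2 ^ N - y) \<le> (1/2) ^ N" for N :: nat
  proof -
    have "\<lfloor>y * 2 ^ N\<rfloor> / 2 ^ N - y = (\<lfloor>y * 2 ^ N\<rfloor> - y * 2 ^ N) / 2 ^ N"
      by (simp add: field_simps)
    moreover have "\<bar>\<lfloor>y * 2 ^ N\<rfloor> - y * 2 ^ N\<bar> / 2 ^ N \<le> 1 / 2 ^ N"
      by (intro divide_right_mono) (linarith, simp)
    ultimately show ?thesis
      by (simp add: power_divide)
  qed
  moreover have "(\<lambda>N. (1/2::real) ^ N) \<longlonglongrightarrow> 0"
    by (rule LIMSEQ_realpow_zero) auto
  ultimately have "(\<lambda>N. \<lfloor>y * 2 ^ N\<rfloor> / 2 ^ N - y) \<longlonglongrightarrow> 0"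
    by (rule Lim_null_comparison[OF always_eventually, OF allI])
  then have "(\<lambda>N. \<lfloor>y * 2 ^ N\<rfloor> / 2 ^ N) \<longlonglongrightarrow> y"
    by (rule LIM_zero_cancel)
  then have "(\<lambda>N. \<lfloor>y * 2 ^ N\<rfloor> / 2 ^ N - \<lfloor>y\<rfloor>) \<longlonglongrightarrow> y - \<lfloor>y\<rfloor>"
    by (rule tendsto_diff) simp
  then have "(\<lambda>n. real (binary_digit y n) / 2 ^ Suc n) sums (y - \<lfloor>y\<rfloor>)"
    unfolding sums_def partial .
  then show ?thesis
    unfolding binary_value_def by (rule sums_unique[symmetric])
qed

definition seq_decode :: "(nat \<Rightarrow> nat) \<Rightarrow> real" where
  "seq_decode s = int_decode (s 0) + binary_value (\<lambda>n. s (Suc n) mod 2)"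

lemma seq_decode_agree:
  assumes "\<forall>i\<le>N. s i = t i"
  shows "\<bar>seq_decode s - seq_decode t\<bar> \<le> (1/2) ^ N"
proof -
  have "\<forall>n<N. s (Suc n) mod 2 = t (Suc n) mod 2"
    using assms by simp
  then have "\<bar>binary_value (\<lambda>n. s (Suc n) mod 2) - binary_value (\<lambda>n. t (Suc n) mod 2)\<bar> \<le> (1/2) ^ N"
    by (intro binary_value_agree) auto
  moreover have "s 0 = t 0"
    using assms by simp
  ultimately show ?thesis
    by (simp add: seq_decode_def)
qed

definition code_seq :: "(nat \<Rightarrow> nat) \<Rightarrow> real \<Rightarrow> nat \<Rightarrow> nat" where
  "code_seq a y n = (case n of
      0 \<Rightarrow> int_encode \<lfloor>y\<rfloor>
    | Suc m \<Rightarrow> 2 * (int_encode \<lfloor>y\<rfloor> + Suc m + (\<Sum>k\<le>Suc m. a k)) + binary_digit y m)"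

lemma strict_mono_code_seq: "strict_mono (code_seq a y)"
proof (rule strict_monoI_Suc)
  fix n
  show "code_seq a y n < code_seq a y (Suc n)"
    using binary_digit_le_1[of y "n - 1"] by (cases n) (simp_all add: code_seq_def)
qed

lemma code_seq_ge: "a (Suc m) \<le> code_seq a y (Suc m)"
proof -
  have "a (Suc m) \<le> (\<Sum>k\<le>Suc m. a k)"
    by (rule member_le_sum) auto
  then show ?thesis
    by (simp add: code_seq_def)
qed

lemma seq_decode_code_seq: "seq_decode (code_seq a y) = y"
proof -
  have "code_seq a y (Suc n) mod 2 = binary_digit y n" for n
    using binary_digit_le_1[of y n] by (simp add: code_seq_def) presburger
  then have "(\<lambda>n. code_seq a y (Suc n) mod 2) = binary_digit y"
    by blast
  moreover have "code_seq a y 0 = int_encode \<lfloor>y\<rfloor>"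
    by (simp add: code_seq_def)
  ultimately have "seq_decode (code_seq a y) = \<lfloor>y\<rfloor> + binary_value (binary_digit y)"
    by (simp only: seq_decode_def int_encode_inverse)
  then show ?thesis
    by (simp add: binary_value_binary_digit)
qed

lemma le_star_if_code_seq_less:
  assumes "\<forall>n. code_seq a y n < g n"
  shows "le_star a g"
  unfolding le_star_def eventually_sequentially
proof (intro exI allI impI)
  fix n :: nat assume "1 \<le> n"
  then obtain m where "n = Suc m"
    by (cases n) auto
  then show "a n \<le> g n"
    using code_seq_ge[of a m y] assms by (metis less_imp_le_nat order.trans)
qed

definition point_decode :: "real \<Rightarrow> real" where
  "point_decode = seq_decode \<circ> inv_into {s. strict_mono s} ternary_point"

lemma point_decode_ternary_point: "strict_mono s \<Longrightarrow> point_decode (ternary_point s) = seq_decode s"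
  by (simp add: point_decode_def inj_on_ternary_point)

lemma continuous_on_point_decode: "continuous_on (ternary_point ` {s. strict_mono s}) point_decode"
  unfolding continuous_on_iff
proof (intro ballI allI impI)
  fix x \<epsilon> :: real assume "x \<in> ternary_point ` {s. strict_mono s}" "0 < \<epsilon>"
  then obtain s where s: "strict_mono s" and x: "x = ternary_point s"
    by auto
  obtain N where N: "(1/2::real) ^ N < \<epsilon>"
    using real_arch_pow_inv[OF \<open>0 < \<epsilon>\<close>, of "1/2"] by auto
  show "\<exists>\<delta>>0. \<forall>x'\<in>ternary_point ` {s. strict_mono s}.
          dist x' x < \<delta> \<longrightarrow> dist (point_decode x') (point_decode x) < \<epsilon>"
  proof (intro exI conjI ballI impI)
    show "0 < 1/2 * (1/3::real) ^ s N"
      by simp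
    fix x' assume "x' \<in> ternary_point ` {s. strict_mono s}"
      and close: "dist x' x < 1/2 * (1/3) ^ s N"
    then obtain t where t: "strict_mono t" and x': "x' = ternary_point t"
      by auto
    have "\<forall>i\<le>N. s i = t i"
    proof (rule ccontr)
      assume "\<not> (\<forall>i\<le>N. s i = t i)"
      then obtain i where "i \<le> N" "s i \<noteq> t i"
        by auto
      from ternary_point_separated[OF s t this] close show False
        unfolding x x' dist_real_def by (simp add: abs_minus_commute)
    qed
    then have "\<bar>seq_decode s - seq_decode t\<bar> \<le> (1/2) ^ N"
      by (rule seq_decode_agree)
    then show "dist (point_decode x') (point_decode x) < \<epsilon>"
      using N unfolding x x' dist_real_def
      by (simp add: point_decode_ternary_point s t abs_minus_commute)
  qed
qed

fun branch_bound :: "(nat list \<Rightarrow> nat) \<Rightarrow> nat \<Rightarrow> nat" where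
  "branch_bound h 0 = 0"
| "branch_bound h (Suc n) =
     max (branch_bound h n) (Max (h ` {p. set p \<subseteq> {..<branch_bound h n} \<and> length p = n}))"

lemma less_branch_bound:
  assumes branch: "\<forall>n. s n < h (map s [0..<n])"
  shows "m < n \<Longrightarrow> s m < branch_bound h n"
proof (induction n arbitrary: m)
  case 0
  then show ?case by simp
next
  case (Suc n)
  show ?case
  proof (cases "m < n")
    case True
    then show ?thesis
      using Suc.IH by (simp add: less_max_iff_disj)
  next
    case False
    with Suc.prems have "m = n"
      by simp
    let ?prefixes = "{p. set p \<subseteq> {..<branch_bound h n} \<and> length p = n}"
    have "map s [0..<n] \<in> ?prefixes"
      using Suc.IH by auto
    moreover have "finite ?prefixes"
      by (rule finite_lists_length_eq) simp
    ultimately have "h (map s [0..<n]) \<le> Max (h ` ?prefixes)"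
      by (intro Max_ge finite_imageI imageI)
    with branch \<open>m = n\<close> show ?thesis
      by (auto simp: less_max_iff_disj intro: less_le_trans)
  qed
qed

lemma ternary_thresholds:
  fixes r :: "'a \<Rightarrow> real"
  assumes "\<And>p. 0 < r p"
  obtains h :: "'a \<Rightarrow> nat" where "\<And>p m. h p \<le> m \<Longrightarrow> 3/2 * (1/3::real) ^ m \<le> r p"
proof -
  have "\<exists>M. \<forall>m\<ge>M. 3/2 * (1/3::real) ^ m \<le> r p" for p
  proof -
    obtain M where M: "(1/3::real) ^ M < r p * (2/3)"
      using real_arch_pow_inv[of "r p * (2/3)" "1/3"] assms[of p] by auto
    have "3/2 * (1/3::real) ^ m \<le> r p" if "M \<le> m" for m
    proof -
      have "(1/3::real) ^ m \<le> (1/3) ^ M"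
        using that by (rule power_decreasing) simp_all
      with M show ?thesis
        by linarith
    qed
    then show ?thesis
      by blast
  qed
  then show thesis
    using that choice[of "\<lambda>p M. \<forall>m\<ge>M. 3/2 * (1/3::real) ^ m \<le> r p"] by blast
qed

definition prefix_sum :: "nat list \<Rightarrow> real" where
  "prefix_sum p = (\<Sum>i<length p. (1/3) ^ (p ! i))"

lemma prefix_sum_map: "prefix_sum (map s [0..<n]) = (\<Sum>i<n. (1/3) ^ s i)"
  by (simp add: prefix_sum_def)

lemma ternary_point_mem_prefix_interval:
  assumes s: "strict_mono s" and small: "3/2 * (1/3) ^ s n \<le> r"
  shows "ternary_point s \<in> {prefix_sum (map s [0..<n]) - r..prefix_sum (map s [0..<n]) + r}"
proof -
  have "\<bar>ternary_point s - prefix_sum (map s [0..<n])\<bar> \<le> r"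
    unfolding prefix_sum_map using ternary_point_approx[OF s, of n] small by linarith
  then show ?thesis
    by (auto simp: abs_le_iff)
qed

lemma strongly_null_ternary_points:
  assumes mono: "S \<subseteq> {s. strict_mono s}"
    and bounded_null: "\<And>g. strongly_null (ternary_point ` {s \<in> S. \<forall>n. s n < g n})"
  shows "strongly_null (ternary_point ` S)"
proof (rule strongly_null_if_remainder_strongly_null)
  fix eps :: "nat \<Rightarrow> real" assume eps: "\<forall>n. 0 < eps n"
  define r where "r k = eps k / 3" for k
  define center where "center k = prefix_sum (from_nat k)" for k
  obtain h :: "nat list \<Rightarrow> nat"
    where h: "\<And>p m. h p \<le> m \<Longrightarrow> 3/2 * (1/3::real) ^ m \<le> r (to_nat p)"
    using ternary_thresholds[of "\<lambda>p. r (to_nat p)"] eps by (auto simp: r_def)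
  define g where "g n = branch_bound h (Suc n)" for n
  have "ternary_point ` S - (\<Union>k. {center k - r k..center k + r k})
          \<subseteq> ternary_point ` {s \<in> S. \<forall>n. s n < g n}"
  proof
    fix x assume x: "x \<in> ternary_point ` S - (\<Union>k. {center k - r k..center k + r k})"
    then obtain s where "s \<in> S" and x_def: "x = ternary_point s"
      by blast
    with mono have s: "strict_mono s"
      by blast
    have branch: "\<forall>n. s n < h (map s [0..<n])"
    proof (rule allI, rule ccontr)
      fix n assume "\<not> s n < h (map s [0..<n])"
      let ?k = "to_nat (map s [0..<n])"
      have "3/2 * (1/3) ^ s n \<le> r ?k"
        using h[of "map s [0..<n]" "s n"] \<open>\<not> s n < h (map s [0..<n])\<close> by simp
      then have "x \<in> {center ?k - r ?k..center ?k + r ?k}"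
        unfolding x_def center_def from_nat_to_nat by (rule ternary_point_mem_prefix_interval[OF s])
      with x show False
        by blast
    qed
    have "s n < g n" for n
      unfolding g_def by (rule less_branch_bound[OF branch]) simp
    with \<open>s \<in> S\<close> x_def show "x \<in> ternary_point ` {s \<in> S. \<forall>n. s n < g n}"
      by blast
  qed
  then have remainder_null:
    "strongly_null (ternary_point ` S - (\<Union>k. {center k - r k..center k + r k}))"
    by (rule strongly_null_subset[OF bounded_null])
  show "\<exists>a b. (\<forall>k. b k - a k < eps k) \<and> strongly_null (ternary_point ` S - (\<Union>k. {a k..b k}))"
  proof (intro exI conjI allI)
    show "(center k + r k) - (center k - r k) < eps k" for k
      using eps by (simp add: r_def)
  qed (fact remainder_null)
qed

definition code_points :: "((nat \<Rightarrow> nat) \<Rightarrow> real) \<Rightarrow> (nat \<Rightarrow> nat) set \<Rightarrow> real set" where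
  "code_points e A = ternary_point ` (\<lambda>a. code_seq a (e a)) ` A"

lemma strongly_null_code_points:
  assumes unbounded: "strongly_unbounded A" and card: "has_card_nonSMZ A"
  shows "strongly_null (code_points e A)"
  unfolding code_points_def
proof (rule strongly_null_ternary_points)
  show "(\<lambda>a. code_seq a (e a)) ` A \<subseteq> {s. strict_mono s}"
    by (auto simp: strict_mono_code_seq)
  fix g
  let ?Z = "ternary_point ` {s \<in> (\<lambda>a. code_seq a (e a)) ` A. \<forall>n. s n < g n}"
  have "?Z \<subseteq> (\<lambda>a. ternary_point (code_seq a (e a))) ` {a \<in> A. le_star a g}"
    by (auto intro: le_star_if_code_seq_less)
  then have "(card_of ?Z, card_of {a \<in> A. le_star a g}) \<in> ordLeq"
    by (meson card_of_image card_of_mono1 ordLeq_transitive)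
  moreover have "(card_of {a \<in> A. le_star a g}, card_of A) \<in> ordLess"
    using unbounded unfolding strongly_unbounded_def by blast
  ultimately show "strongly_null ?Z"
    using card ordLeq_ordLess_trans unfolding has_card_nonSMZ_def by blast
qed

lemma continuous_on_code_points: "continuous_on (code_points e A) point_decode"
  by (rule continuous_on_subset[OF continuous_on_point_decode])
    (auto simp: code_points_def strict_mono_code_seq)

lemma point_decode_image_code_points: "point_decode ` code_points e A = e ` A"
  unfolding code_points_def image_image
  by (simp add: point_decode_ternary_point strict_mono_code_seq seq_decode_code_seq)

lemma obtain_non_strongly_null_image:
  assumes "has_card_nonSMZ A"
  obtains e :: "'a \<Rightarrow> real" where "\<not> strongly_null (e ` A)"
proof -
  obtain Y :: "real set" where "\<not> strongly_null Y" and "(card_of Y, card_of A) \<in> ordIso"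
    using assms unfolding has_card_nonSMZ_def by blast
  moreover from this obtain e where "bij_betw e A Y"
    using card_of_ordIso ordIso_symmetric by blast
  ultimately show thesis
    using that by (auto simp: bij_betw_def)
qed

theorem theorem2p1:
  assumes "\<exists>A :: (nat \<Rightarrow> nat) set. strongly_unbounded A \<and> has_card_nonSMZ A"
  shows "\<exists>(X :: real set) (f :: real \<Rightarrow> real).
           strongly_null X \<and> continuous_on X f \<and> \<not> strongly_null (f ` X)"
proof -
  obtain A :: "(nat \<Rightarrow> nat) set" where unbounded: "strongly_unbounded A" and card: "has_card_nonSMZ A"
    using assms by blast
  obtain e where "\<not> strongly_null (e ` A)"
    using obtain_non_strongly_null_image[OF card] .
  then have "\<not> strongly_null (point_decode ` code_points e A)"
    by (simp add: point_decode_image_code_points)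
  with strongly_null_code_points[OF unbounded card] continuous_on_code_points
  show ?thesis
    by blast
qed

end
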